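(* Let $\bar x\in\Phi$ be a local second-order weak sharp minimizer of problem (P) with corresponding constants $\kappa>0$ and $\delta>0$. Then for any $\varepsilon\in[0,1/2)$, every $x\in S\cap B_\delta(\bar x)$, every $d\in C(x)\cap N^{P,\varepsilon}_S(x)$, and every $\lambda\in\mathbb{R}^m$ with $\nabla_x L(x,\lambda)=0$, one has (i) $\sigma_{\nabla g(x)(T''_\Phi(x;d))}(\lambda)\le 0$; (ii) $\nabla^2_{xx}L(x,\lambda)(d,d)-\sigma_{\nabla g(x)(T^2_\Phi(x;d))+\nabla^2 g(x)(d,d)}(\lambda)\ge 2\kappa(1-2\varepsilon)^2\|d\|^2$.
   Context: Standing setting: $f:\mathbb{R}^n\to\mathbb{R}$ and $g:\mathbb{R}^n\to\mathbb{R}^m$ are twice continuously differentiable, $K\subset\mathbb{R}^m$ is closed, and (P) is the problem $\min f(x)$ s.t. $g(x)\in K$. $\Phi:=\{x\in\mathbb{R}^n: g(x)\in K\}$ is the feasible set and $S$ is the (nonempty) set of optimal solutions of (P). $L(x,\lambda):=f(x)+\langle g(x),\lambda\rangle$. $B_\delta(x)$ is the ball of radius $\delta$ centered at $x$. A point $\bar x\in\Phi$ is a local second-order weak sharp minimizer of (P) with constants $\kappa,\delta>0$ if $f(x)\ge f(\bar x)+\kappa[\mathrm{dist}(x,S)]^2$ for all $x\in\Phi\cap B_\delta(\bar x)$. For a closed set $A$ and $\bar x\in A$: the tangent cone is $T_A(\bar x):=\{d:\exists t_k\downarrow0,d_k\to d,\ \bar x+t_kd_k\in A\}$; the outer second-order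 tangent set in direction $d\in T_A(\bar x)$ is $T^2_A(\bar x;d):=\{w:\exists t_k\downarrow0,w_k\to w,\ \bar x+t_kd+\tfrac12t_k^2w_k\in A\}$; the asymptotic second-order tangent cone is $T''_A(\bar x;d):=\{w:\exists (t_k,r_k)\downarrow(0,0)\text{ with } t_k/r_k\to0,\ w_k\to w,\ \bar x+t_kd+\tfrac12t_kr_kw_k\in A\}$. The critical cone at a feasible $x$ is $C(x):=\{d:\nabla g(x)d\in T_K(g(x)),\ \nabla f(x)d\le0\}$. The proximal normal cone is $N^P_A(\bar x):=\{v:\exists\tau>0 \text{ such that } \bar x \text{ is a nearest point of } A \text{ to } \bar x+\tau v\}$, and for $\varepsilon\ge0$ the $\varepsilon$-proximal normal cone is $N^{P,\varepsilon}_A(\bar x):=\{v:\mathrm{dist}(v,N^P_A(\bar x))\le\varepsilon\|v\|\}$. $\sigma_A(\lambda):=\sup_{u\in A}\langle\lambda,u\rangle$ (equal to $-\infty$ if $A=\emptyset$). $\nabla g(x)\in\mathbb{R}^{m\times n}$ is the Jacobian, $\nabla^2g(x)(d,d):=(d^T\nabla^2g_1(x)d,\dots,d^T\nabla^2g_m(x)d)$, and for a set $A\subset\mathbb{R}^n$, $\nabla g(x)(A):=\{\nabla g(x)u:u\in A\}$. *)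

theory Defs
  imports "HOL-Analysis.Analysis"
begin

definition tangent_cone :: "('a::real_normed_vector) set \<Rightarrow> 'a \<Rightarrow> 'a set" where
  "tangent_cone A x = {d. \<exists>t dk. (\<forall>k. t k > 0) \<and> t \<longlonglongrightarrow> 0 \<and> dk \<longlonglongrightarrow> d \<and>
      (\<forall>k. x + t k *\<^sub>R dk k \<in> A)}"

definition second_order_tangent_set :: "('a::real_normed_vector) set \<Rightarrow> 'a \<Rightarrow> 'a \<Rightarrow> 'a set" where
  "second_order_tangent_set A x d = {w. \<exists>t wk. (\<forall>k. t k > 0) \<and> t \<longlonglongrightarrow> 0 \<and> wk \<longlonglongrightarrow> w \<and>
      (\<forall>k. x + t k *\<^sub>R d + (1/2 * (t k)\<^sup>2) *\<^sub>R wk k \<in> A)}"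

definition asymptotic_second_order_tangent_cone :: "('a::real_normed_vector) set \<Rightarrow> 'a \<Rightarrow> 'a \<Rightarrow> 'a set" where
  "asymptotic_second_order_tangent_cone A x d = {w. \<exists>t r wk.
      (\<forall>k. t k > 0) \<and> (\<forall>k. r k > 0) \<and> t \<longlonglongrightarrow> 0 \<and> r \<longlonglongrightarrow> 0 \<and>
      (\<lambda>k. t k / r k) \<longlonglongrightarrow> 0 \<and> wk \<longlonglongrightarrow> w \<and>
      (\<forall>k. x + t k *\<^sub>R d + (1/2 * t k * r k) *\<^sub>R wk k \<in> A)}"

definition proximal_normal_cone :: "('a::real_normed_vector) set \<Rightarrow> 'a \<Rightarrow> 'a set" where
  "proximal_normal_cone A x = {v. \<exists>\<tau>>0. x \<in> A \<and> (\<forall>a\<in>A. dist (x + \<tau> *\<^sub>R v) x \<le> dist (x + \<tau> *\<^sub>R v) a)}"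

definition eps_proximal_normal_cone :: "real \<Rightarrow> ('a::real_normed_vector) set \<Rightarrow> 'a \<Rightarrow> 'a set" where
  "eps_proximal_normal_cone \<epsilon> A x = {v. proximal_normal_cone A x \<noteq> {} \<and>
      infdist v (proximal_normal_cone A x) \<le> \<epsilon> * norm v}"

text \<open>Support function (value -\<infinity> on the empty set, possibly +\<infinity>).\<close>
definition support_fun :: "('a::real_inner) set \<Rightarrow> 'a \<Rightarrow> ereal" where
  "support_fun A l = (SUP u\<in>A. ereal (l \<bullet> u))"

definition feasible_set :: "('n \<Rightarrow> 'm) \<Rightarrow> 'm set \<Rightarrow> 'n set" where
  "feasible_set g K = {x. g x \<in> K}"

definition solution_set :: "('n \<Rightarrow> real) \<Rightarrow> ('n \<Rightarrow> 'm) \<Rightarrow> 'm set \<Rightarrow> 'n set" where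
  "solution_set f g K = {x \<in> feasible_set g K. \<forall>y \<in> feasible_set g K. f x \<le> f y}"

definition local_second_order_weak_sharp_min ::
  "('n::real_normed_vector \<Rightarrow> real) \<Rightarrow> ('n \<Rightarrow> 'm) \<Rightarrow> 'm set \<Rightarrow> 'n \<Rightarrow> real \<Rightarrow> real \<Rightarrow> bool" where
  "local_second_order_weak_sharp_min f g K xb \<kappa> \<delta> \<longleftrightarrow>
     xb \<in> feasible_set g K \<and> \<kappa> > 0 \<and> \<delta> > 0 \<and>
     (\<forall>x \<in> feasible_set g K \<inter> ball xb \<delta>.
        f x \<ge> f xb + \<kappa> * (infdist x (solution_set f g K))\<^sup>2)"

definition critical_cone ::
  "(real^'n \<Rightarrow> real^'n) \<Rightarrow> (real^'n \<Rightarrow> real^'n^'m) \<Rightarrow> (real^'n \<Rightarrow> real^'m) \<Rightarrow> (real^'m) set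
     \<Rightarrow> real^'n \<Rightarrow> (real^'n) set" where
  "critical_cone gf J g K x = {d. J x *v d \<in> tangent_cone K (g x) \<and> gf x \<bullet> d \<le> 0}"

end

theory Submission
  imports Defs
begin

(* For a feasible sequence x + t_k u_k realising w, with u_k = d + (r_k / 2) w_k (r_k = t_k for the
   outer second-order tangent set), minimality of x and criticality of d give grad f(x) d = 0, and
   second-order Taylor expansion gives
     f(x + t_k u_k) - f(x) = (t_k r_k / 2) grad f(x) w_k + (t_k^2 / 2) d' Hf(x) d + o(t_k^2).
   For the asymptotic cone t_k / r_k -> 0, so grad f(x) w >= 0.  For the second-order tangent set,
   quadratic growth f(y) - f(x) >= kappa dist(y, S)^2 and the proximal normal inequality
   |v| dist(x + h, S) >= <v, h> - O(|h|^2) give <v, d> <= |v| sqrt(A / (2 kappa)) for every proximal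
   normal v, where A = grad f(x) w + d' Hf(x) d; since d is within eps |d| of such v, this forces
   (1 - 2 eps) |d| <= sqrt(A / (2 kappa)).  The Lagrange equation turns the support functions into
   these quantities. *)

lemma remainder_along_sequence_tendsto_0:
  fixes R :: "'a::real_normed_vector \<Rightarrow> real"
  assumes small: "\<And>e. e > 0 \<Longrightarrow> \<exists>r>0. \<forall>h. norm h < r \<longrightarrow> \<bar>R h\<bar> \<le> e * norm h ^ p"
    and t_pos: "\<And>k. t k > 0" and t: "t \<longlonglongrightarrow> 0" and u: "u \<longlonglongrightarrow> u0"
  shows "(\<lambda>k. R (t k *\<^sub>R u k) / t k ^ p) \<longlonglongrightarrow> 0"
proof (rule LIMSEQ_I)
  fix e :: real assume "e > 0"
  define B where "B = norm u0 + 1"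
  have B: "B > 0" unfolding B_def by (simp add: add_nonneg_pos)
  obtain r where r: "r > 0" and R_le: "\<And>h. norm h < r \<Longrightarrow> \<bar>R h\<bar> \<le> e / (2 * B ^ p) * norm h ^ p"
    using small[of "e / (2 * B ^ p)"] \<open>e > 0\<close> B by auto
  have "\<forall>\<^sub>F k in sequentially. norm (u k) < B"
    unfolding B_def by (rule order_tendstoD(2)[OF tendsto_norm[OF u]]) simp
  moreover have "\<forall>\<^sub>F k in sequentially. t k < r / B"
    by (rule order_tendstoD(2)[OF t]) (use r B in simp)
  ultimately have "\<forall>\<^sub>F k in sequentially. norm (u k) < B \<and> t k < r / B"
    by (rule eventually_conj)
  then obtain N where N: "\<And>k. k \<ge> N \<Longrightarrow> norm (u k) < B \<and> t k < r / B"
    unfolding eventually_sequentially by blast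
  show "\<exists>N. \<forall>k\<ge>N. norm (R (t k *\<^sub>R u k) / t k ^ p - 0) < e"
  proof (intro exI allI impI)
    fix k assume "k \<ge> N"
    have tk: "t k > 0" by (rule t_pos)
    have "norm (t k *\<^sub>R u k) \<le> t k * B"
      using N[OF \<open>k \<ge> N\<close>] tk by (simp add: mult_left_mono less_imp_le)
    also have "\<dots> < r" using N[OF \<open>k \<ge> N\<close>] B by (simp add: pos_less_divide_eq)
    finally have "\<bar>R (t k *\<^sub>R u k)\<bar> \<le> e / (2 * B ^ p) * (t k * norm (u k)) ^ p"
      using R_le tk by (metis abs_of_pos norm_scaleR)
    then have "\<bar>R (t k *\<^sub>R u k) / t k ^ p\<bar> \<le> e / (2 * B ^ p) * norm (u k) ^ p"
      using tk by (simp add: abs_divide power_mult_distrib pos_divide_le_eq mult_ac)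
    also have "\<dots> \<le> e / (2 * B ^ p) * B ^ p"
      using N[OF \<open>k \<ge> N\<close>] \<open>e > 0\<close> B by (intro mult_left_mono power_mono) auto
    also have "\<dots> < e" using \<open>e > 0\<close> B by simp
    finally show "norm (R (t k *\<^sub>R u k) / t k ^ p - 0) < e" by simp
  qed
qed

lemma second_order_taylor_bound:
  fixes f :: "'a::real_inner \<Rightarrow> real"
  assumes f_deriv: "\<And>y. (f has_derivative (\<lambda>h. gf y \<bullet> h)) (at y)"
    and gf_deriv: "(gf has_derivative H) (at x)" and "e > 0"
  shows "\<exists>r>0. \<forall>h. norm h < r \<longrightarrow> \<bar>f (x + h) - f x - gf x \<bullet> h - h \<bullet> H h / 2\<bar> \<le> e * norm h ^ 2"
proof -
  have H: "linear H" using has_derivative_linear[OF gf_deriv] .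
  obtain r where "r > 0" and r: "\<And>y. norm (y - x) < r \<Longrightarrow> norm (gf y - gf x - H (y - x)) \<le> e * norm (y - x)"
    using gf_deriv \<open>e > 0\<close> unfolding has_derivative_at_alt by blast
  have "\<bar>f (x + h) - f x - gf x \<bullet> h - h \<bullet> H h / 2\<bar> \<le> e * norm h ^ 2" if "norm h < r" for h
  proof -
    define \<psi> where "\<psi> s = f (x + s *\<^sub>R h) - s * (gf x \<bullet> h) - s\<^sup>2 / 2 * (h \<bullet> H h)" for s
    define \<psi>' where "\<psi>' s = (gf (x + s *\<^sub>R h) - gf x - H (s *\<^sub>R h)) \<bullet> h" for s
    have "(\<psi> has_real_derivative \<psi>' s) (at s)" for s
    proof -
      have "((\<lambda>s. x + s *\<^sub>R h) has_derivative (\<lambda>\<sigma>. \<sigma> *\<^sub>R h)) (at s)"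
        by (auto intro!: derivative_eq_intros)
      from has_derivative_compose[OF this f_deriv]
      have "((\<lambda>s. f (x + s *\<^sub>R h)) has_derivative (\<lambda>\<sigma>. gf (x + s *\<^sub>R h) \<bullet> (\<sigma> *\<^sub>R h))) (at s)"
        by (simp add: o_def)
      then have "((\<lambda>s. f (x + s *\<^sub>R h)) has_real_derivative gf (x + s *\<^sub>R h) \<bullet> h) (at s)"
        unfolding has_field_derivative_def by (rule has_derivative_eq_rhs) (auto simp: fun_eq_iff)
      then have "(\<psi> has_real_derivative gf (x + s *\<^sub>R h) \<bullet> h - gf x \<bullet> h - (2 * s / 2) * (h \<bullet> H h)) (at s)"
        unfolding \<psi>_def by (auto intro!: derivative_eq_intros)
      then show ?thesis
        unfolding \<psi>'_def by (simp add: linear_scale[OF H] inner_diff_left inner_diff_right inner_commute)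
    qed
    then obtain z where z: "0 < z" "z < 1" and mvt: "\<psi> 1 - \<psi> 0 = \<psi>' z"
      using MVT2[of 0 1 \<psi> \<psi>'] by auto
    have "\<bar>\<psi>' z\<bar> \<le> norm (gf (x + z *\<^sub>R h) - gf x - H (z *\<^sub>R h)) * norm h"
      unfolding \<psi>'_def by (rule Cauchy_Schwarz_ineq2)
    also have "\<dots> \<le> e * (z * norm h) * norm h"
      using r[of "x + z *\<^sub>R h"] \<open>norm h < r\<close> z mult_left_le_one_le[of "norm h" z]
      by (intro mult_right_mono) auto
    also have "\<dots> \<le> e * norm h ^ 2"
      using z \<open>e > 0\<close> mult_left_le_one_le[of "norm h * norm h" z] by (simp add: power2_eq_square)
    finally show ?thesis using mvt unfolding \<psi>_def by simp
  qed
  with \<open>r > 0\<close> show ?thesis by blast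
qed

lemma difference_quotient_along_sequence_tendsto:
  fixes f :: "'a::real_normed_vector \<Rightarrow> real"
  assumes f_deriv: "(f has_derivative f') (at x)"
    and t_pos: "\<And>k. t k > 0" and t: "t \<longlonglongrightarrow> 0" and u: "u \<longlonglongrightarrow> u0"
  shows "(\<lambda>k. (f (x + t k *\<^sub>R u k) - f x) / t k) \<longlonglongrightarrow> f' u0"
proof -
  define R where "R h = f (x + h) - f x - f' h" for h
  have lin: "bounded_linear f'" using has_derivative_bounded_linear[OF f_deriv] .
  have "\<exists>r>0. \<forall>h. norm h < r \<longrightarrow> \<bar>R h\<bar> \<le> e * norm h ^ 1" if "e > 0" for e
  proof -
    obtain r where "r > 0" "\<forall>y. norm (y - x) < r \<longrightarrow> norm (f y - f x - f' (y - x)) \<le> e * norm (y - x)"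
      using f_deriv \<open>e > 0\<close> unfolding has_derivative_at_alt by blast
    then show ?thesis unfolding R_def by (metis add_diff_cancel_left' power_one_right real_norm_def)
  qed
  from remainder_along_sequence_tendsto_0[OF this t_pos t u]
  have "(\<lambda>k. R (t k *\<^sub>R u k) / t k + f' (u k)) \<longlonglongrightarrow> 0 + f' u0"
    by (intro tendsto_add bounded_linear.tendsto[OF lin] u) simp
  moreover have "R (t k *\<^sub>R u k) / t k + f' (u k) = (f (x + t k *\<^sub>R u k) - f x) / t k" for k
    using t_pos[of k] unfolding R_def by (simp add: linear_scale[OF bounded_linear.linear[OF lin]] field_simps)
  ultimately show ?thesis by simp
qed

lemma second_order_quotient_along_sequence_tendsto:
  fixes f :: "'a::real_inner \<Rightarrow> real"
  assumes f_deriv: "\<And>y. (f has_derivative (\<lambda>h. gf y \<bullet> h)) (at y)"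
    and gf_deriv: "(gf has_derivative H) (at x)"
    and t_pos: "\<And>k. t k > 0" and t: "t \<longlonglongrightarrow> 0" and u: "u \<longlonglongrightarrow> u0"
  shows "(\<lambda>k. (f (x + t k *\<^sub>R u k) - f x - t k * (gf x \<bullet> u k)) / (t k)\<^sup>2) \<longlonglongrightarrow> u0 \<bullet> H u0 / 2"
proof -
  define R where "R h = f (x + h) - f x - gf x \<bullet> h - h \<bullet> H h / 2" for h
  have lin: "bounded_linear H" using has_derivative_bounded_linear[OF gf_deriv] .
  from remainder_along_sequence_tendsto_0[where R = R and p = 2, OF _ t_pos t u]
  have "(\<lambda>k. R (t k *\<^sub>R u k) / (t k)\<^sup>2 + u k \<bullet> H (u k) / 2) \<longlonglongrightarrow> 0 + u0 \<bullet> H u0 / 2"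
    using second_order_taylor_bound[OF f_deriv gf_deriv] unfolding R_def
    by (intro tendsto_intros bounded_linear.tendsto[OF lin] u) auto
  moreover have "R (t k *\<^sub>R u k) / (t k)\<^sup>2 + u k \<bullet> H (u k) / 2
      = (f (x + t k *\<^sub>R u k) - f x - t k * (gf x \<bullet> u k)) / (t k)\<^sup>2" for k
    using t_pos[of k] unfolding R_def
    by (simp add: linear_scale[OF bounded_linear.linear[OF lin]] field_simps power2_eq_square)
  ultimately show ?thesis by simp
qed

lemma eventually_nhds_along_sequence:
  fixes x :: "'a::real_normed_vector"
  assumes "\<forall>\<^sub>F y in nhds x. P y" and "t \<longlonglongrightarrow> 0" and "u \<longlonglongrightarrow> u0"
  shows "\<forall>\<^sub>F k in sequentially. P (x + t k *\<^sub>R u k)"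
proof (rule eventually_compose_filterlim[OF assms(1)])
  show "(\<lambda>k. x + t k *\<^sub>R u k) \<longlonglongrightarrow> x"
    using tendsto_add[OF tendsto_const tendsto_scaleR[OF assms(2,3)], of x] by simp
qed

lemma second_order_tangent_setE:
  assumes "w \<in> second_order_tangent_set A x d"
  obtains t wk where "\<And>k. t k > 0" "t \<longlonglongrightarrow> 0" "wk \<longlonglongrightarrow> w"
    "(\<lambda>k. d + (t k / 2) *\<^sub>R wk k) \<longlonglongrightarrow> d" "\<And>k. x + t k *\<^sub>R (d + (t k / 2) *\<^sub>R wk k) \<in> A"
proof -
  obtain t wk where "\<forall>k. t k > 0" "t \<longlonglongrightarrow> 0" "wk \<longlonglongrightarrow> w"
    and "\<forall>k. x + t k *\<^sub>R d + (1/2 * (t k)\<^sup>2) *\<^sub>R wk k \<in> A"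
    using assms unfolding second_order_tangent_set_def by blast
  moreover have "(\<lambda>k. d + (t k / 2) *\<^sub>R wk k) \<longlonglongrightarrow> d + (0 / 2) *\<^sub>R w"
    by (intro tendsto_intros \<open>t \<longlonglongrightarrow> 0\<close> \<open>wk \<longlonglongrightarrow> w\<close>) simp
  ultimately show ?thesis
    by (intro that[of t wk]) (auto simp: algebra_simps power2_eq_square)
qed

lemma asymptotic_second_order_tangent_coneE:
  assumes "w \<in> asymptotic_second_order_tangent_cone A x d"
  obtains t r wk where "\<And>k. t k > 0" "\<And>k. r k > 0" "t \<longlonglongrightarrow> 0" "(\<lambda>k. t k / r k) \<longlonglongrightarrow> 0"
    "wk \<longlonglongrightarrow> w" "(\<lambda>k. d + (r k / 2) *\<^sub>R wk k) \<longlonglongrightarrow> d"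
    "\<And>k. x + t k *\<^sub>R (d + (r k / 2) *\<^sub>R wk k) \<in> A"
proof -
  obtain t r wk where "\<forall>k. t k > 0" "\<forall>k. r k > 0" "t \<longlonglongrightarrow> 0" "r \<longlonglongrightarrow> 0"
    "(\<lambda>k. t k / r k) \<longlonglongrightarrow> 0" "wk \<longlonglongrightarrow> w"
    and "\<forall>k. x + t k *\<^sub>R d + (1/2 * t k * r k) *\<^sub>R wk k \<in> A"
    using assms unfolding asymptotic_second_order_tangent_cone_def by blast
  moreover have "(\<lambda>k. d + (r k / 2) *\<^sub>R wk k) \<longlonglongrightarrow> d + (0 / 2) *\<^sub>R w"
    by (intro tendsto_intros \<open>r \<longlonglongrightarrow> 0\<close> \<open>wk \<longlonglongrightarrow> w\<close>) simp
  ultimately show ?thesis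
    by (intro that[of t r wk]) (auto simp: algebra_simps)
qed

lemma local_minimizer_tangent_cone_nonneg:
  fixes f :: "'a::real_normed_vector \<Rightarrow> real"
  assumes f_deriv: "(f has_derivative f') (at x)"
    and min: "\<forall>\<^sub>F y in nhds x. y \<in> A \<longrightarrow> f x \<le> f y"
    and "d \<in> tangent_cone A x"
  shows "0 \<le> f' d"
proof -
  obtain t u where t_pos: "\<And>k. t k > 0" and t: "t \<longlonglongrightarrow> 0" and u: "u \<longlonglongrightarrow> d"
    and feasible: "\<And>k. x + t k *\<^sub>R u k \<in> A"
    using \<open>d \<in> tangent_cone A x\<close> unfolding tangent_cone_def by blast
  show ?thesis
  proof (rule tendsto_lowerbound[OF difference_quotient_along_sequence_tendsto[OF f_deriv t_pos t u]])
    show "\<forall>\<^sub>F k in sequentially. 0 \<le> (f (x + t k *\<^sub>R u k) - f x) / t k"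
      using eventually_nhds_along_sequence[OF min t u] feasible t_pos
      by (auto elim!: eventually_mono intro!: divide_nonneg_pos)
  qed simp
qed

lemma local_minimizer_asymptotic_second_order_tangent_nonneg:
  fixes f :: "'a::real_inner \<Rightarrow> real"
  assumes f_deriv: "\<And>y. (f has_derivative (\<lambda>h. gf y \<bullet> h)) (at y)"
    and gf_deriv: "(gf has_derivative H) (at x)"
    and min: "\<forall>\<^sub>F y in nhds x. y \<in> A \<longrightarrow> f x \<le> f y"
    and critical: "gf x \<bullet> d \<le> 0" and w: "w \<in> asymptotic_second_order_tangent_cone A x d"
  shows "0 \<le> gf x \<bullet> w"
proof -
  obtain t r wk where t_pos: "\<And>k. t k > 0" and r_pos: "\<And>k. r k > 0" and t: "t \<longlonglongrightarrow> 0"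
    and t_r: "(\<lambda>k. t k / r k) \<longlonglongrightarrow> 0" and wk: "wk \<longlonglongrightarrow> w"
    and u: "(\<lambda>k. d + (r k / 2) *\<^sub>R wk k) \<longlonglongrightarrow> d"
    and feasible: "\<And>k. x + t k *\<^sub>R (d + (r k / 2) *\<^sub>R wk k) \<in> A"
    using asymptotic_second_order_tangent_coneE[OF w] by blast
  define u where "u k = d + (r k / 2) *\<^sub>R wk k" for k
  define Q where "Q k = (f (x + t k *\<^sub>R u k) - f x - t k * (gf x \<bullet> u k)) / (t k)\<^sup>2" for k
  have "d \<in> tangent_cone A x"
    using t_pos t u feasible unfolding tangent_cone_def by blast
  from local_minimizer_tangent_cone_nonneg[OF f_deriv min this] critical
  have "gf x \<bullet> d = 0" by simp
  then have expand: "f (x + t k *\<^sub>R u k) - f x = t k * r k / 2 * (gf x \<bullet> wk k + 2 * (t k / r k) * Q k)" for k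
    using t_pos[of k] r_pos[of k] unfolding Q_def u_def
    by (simp add: inner_add_right field_simps power2_eq_square)
  have Q: "Q \<longlonglongrightarrow> d \<bullet> H d / 2"
    unfolding Q_def u_def by (rule second_order_quotient_along_sequence_tendsto[OF f_deriv gf_deriv t_pos t u])
  have "(\<lambda>k. gf x \<bullet> wk k + 2 * (t k / r k) * Q k) \<longlonglongrightarrow> gf x \<bullet> w + 2 * 0 * (d \<bullet> H d / 2)"
    by (intro tendsto_intros wk t_r Q)
  moreover have "0 \<le> gf x \<bullet> wk k + 2 * (t k / r k) * Q k" if "f x \<le> f (x + t k *\<^sub>R u k)" for k
  proof -
    have "0 \<le> t k * r k / 2 * (gf x \<bullet> wk k + 2 * (t k / r k) * Q k)"
      using that unfolding expand[symmetric] by simp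
    then show ?thesis using mult_pos_pos[OF t_pos[of k] r_pos[of k]] by (simp add: zero_le_mult_iff)
  qed
  then have "\<forall>\<^sub>F k in sequentially. 0 \<le> gf x \<bullet> wk k + 2 * (t k / r k) * Q k"
    using eventually_nhds_along_sequence[OF min t u] feasible unfolding u_def
    by (auto elim!: eventually_mono)
  ultimately show ?thesis by (simp add: tendsto_lowerbound)
qed

lemma proximal_normal_cone_infdist_lower_bound:
  fixes S :: "'a::real_inner set"
  assumes "v \<in> proximal_normal_cone S x"
  obtains \<tau> where "\<tau> > 0" "\<And>h. v \<bullet> h - 2 * (norm h)\<^sup>2 / \<tau> \<le> norm v * infdist (x + h) S"
proof -
  obtain \<tau> where "\<tau> > 0" and "x \<in> S"
    and nearest: "\<And>s. s \<in> S \<Longrightarrow> dist (x + \<tau> *\<^sub>R v) x \<le> dist (x + \<tau> *\<^sub>R v) s"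
    using assms unfolding proximal_normal_cone_def by blast
  have proximal_ineq: "v \<bullet> (s - x) \<le> (norm (s - x))\<^sup>2 / (2 * \<tau>)" if "s \<in> S" for s
  proof -
    have "norm (\<tau> *\<^sub>R v) \<le> norm (\<tau> *\<^sub>R v - (s - x))"
      using nearest[OF that] by (simp add: dist_norm algebra_simps)
    then have "(norm (\<tau> *\<^sub>R v))\<^sup>2 \<le> (norm (\<tau> *\<^sub>R v - (s - x)))\<^sup>2"
      by (rule power_mono) simp
    then have "2 * \<tau> * (v \<bullet> (s - x)) \<le> (norm (s - x))\<^sup>2"
      unfolding power2_norm_eq_inner by (simp add: inner_diff_left inner_diff_right inner_commute algebra_simps)
    with \<open>\<tau> > 0\<close> show ?thesis by (simp add: pos_le_divide_eq mult_ac)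
  qed
  have dist_bound: "v \<bullet> h - 2 * (norm h)\<^sup>2 / \<tau> \<le> norm v * dist (x + h) s" if "s \<in> S" for h s
  proof (cases "norm (s - x) \<le> 2 * norm h")
    case True
    have "(norm (s - x))\<^sup>2 / (2 * \<tau>) \<le> (2 * norm h)\<^sup>2 / (2 * \<tau>)"
      using True \<open>\<tau> > 0\<close> by (intro divide_right_mono power_mono) auto
    also have "\<dots> = 2 * (norm h)\<^sup>2 / \<tau>" by (simp add: power2_eq_square)
    finally have "v \<bullet> h - 2 * (norm h)\<^sup>2 / \<tau> \<le> v \<bullet> (x + h - s)"
      using proximal_ineq[OF that] by (simp add: inner_diff_right inner_add_right)
    also have "\<dots> \<le> norm v * dist (x + h) s"
      by (simp add: dist_norm norm_cauchy_schwarz)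
    finally show ?thesis .
  next
    case False
    have "norm h \<le> norm (s - x) - norm h" using False by simp
    also have "\<dots> \<le> dist (x + h) s"
      using norm_triangle_ineq2[of "s - x" h] by (simp add: dist_norm norm_minus_commute algebra_simps)
    finally have "v \<bullet> h \<le> norm v * dist (x + h) s"
      using norm_cauchy_schwarz[of v h] by (meson mult_left_mono norm_ge_zero order_trans)
    moreover have "0 \<le> 2 * (norm h)\<^sup>2 / \<tau>" using \<open>\<tau> > 0\<close> by simp
    ultimately show ?thesis by linarith
  qed
  have "S \<noteq> {}" using \<open>x \<in> S\<close> by blast
  have "v \<bullet> h - 2 * (norm h)\<^sup>2 / \<tau> \<le> norm v * infdist (x + h) S" for h
  proof (cases "v = 0")
    case False
    have "(v \<bullet> h - 2 * (norm h)\<^sup>2 / \<tau>) / norm v \<le> infdist (x + h) S"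
      unfolding infdist_notempty[OF \<open>S \<noteq> {}\<close>]
      using dist_bound False by (intro cINF_greatest[OF \<open>S \<noteq> {}\<close>]) (simp add: pos_divide_le_eq mult.commute)
    with False show ?thesis by (simp add: pos_divide_le_eq mult.commute)
  qed (use \<open>\<tau> > 0\<close> in simp)
  with \<open>\<tau> > 0\<close> show ?thesis by (rule that)
qed

lemma quadratic_growth_proximal_normal_inner_le:
  fixes f :: "'a::real_inner \<Rightarrow> real"
  assumes "\<kappa> > 0"
    and growth: "\<forall>\<^sub>F y in nhds x. y \<in> A \<longrightarrow> f x + \<kappa> * (infdist y S)\<^sup>2 \<le> f y"
    and v: "v \<in> proximal_normal_cone S x"
    and t_pos: "\<And>k. t k > 0" and t: "t \<longlonglongrightarrow> 0" and u: "u \<longlonglongrightarrow> d"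
    and feasible: "\<And>k. x + t k *\<^sub>R u k \<in> A"
    and quotient: "(\<lambda>k. (f (x + t k *\<^sub>R u k) - f x) / (t k)\<^sup>2) \<longlonglongrightarrow> a"
  shows "v \<bullet> d \<le> norm v * sqrt (a / \<kappa>)"
proof -
  define q where "q k = (f (x + t k *\<^sub>R u k) - f x) / (t k)\<^sup>2" for k
  define D where "D k = infdist (x + t k *\<^sub>R u k) S / t k" for k
  have D_nonneg: "0 \<le> D k" for k
    unfolding D_def using t_pos[of k] by (simp add: infdist_nonneg)
  have "\<kappa> * (D k)\<^sup>2 \<le> q k" if "f x + \<kappa> * (infdist (x + t k *\<^sub>R u k) S)\<^sup>2 \<le> f (x + t k *\<^sub>R u k)" for k
    using that t_pos[of k] unfolding D_def q_def by (simp add: power_divide divide_right_mono)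
  then have growth_q: "\<forall>\<^sub>F k in sequentially. \<kappa> * (D k)\<^sup>2 \<le> q k"
    using eventually_nhds_along_sequence[OF growth t u] feasible by (auto elim!: eventually_mono)
  have "D k \<le> sqrt (q k / \<kappa>)" if "\<kappa> * (D k)\<^sup>2 \<le> q k" for k
    using that D_nonneg[of k] \<open>\<kappa> > 0\<close> by (intro real_le_rsqrt) (simp add: pos_le_divide_eq mult.commute)
  with growth_q have D_le: "\<forall>\<^sub>F k in sequentially. D k \<le> sqrt (q k / \<kappa>)"
    by (auto elim!: eventually_mono)
  obtain \<tau> where "\<tau> > 0" and bound: "\<And>h. v \<bullet> h - 2 * (norm h)\<^sup>2 / \<tau> \<le> norm v * infdist (x + h) S"
    using proximal_normal_cone_infdist_lower_bound[OF v] by blast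
  have lower: "v \<bullet> u k - 2 * t k * (norm (u k))\<^sup>2 / \<tau> \<le> norm v * D k" for k
  proof -
    have "t k * (v \<bullet> u k - 2 * t k * (norm (u k))\<^sup>2 / \<tau>) \<le> t k * (norm v * D k)"
      using bound[of "t k *\<^sub>R u k"] t_pos[of k]
      by (simp add: D_def power2_eq_square algebra_simps)
    with t_pos[of k] show ?thesis by simp
  qed
  have "(\<lambda>k. v \<bullet> u k - 2 * t k * (norm (u k))\<^sup>2 / \<tau>) \<longlonglongrightarrow> v \<bullet> d - 2 * 0 * (norm d)\<^sup>2 / \<tau>"
    using \<open>\<tau> > 0\<close> by (intro tendsto_intros t u) auto
  moreover have "(\<lambda>k. norm v * sqrt (q k / \<kappa>)) \<longlonglongrightarrow> norm v * sqrt (a / \<kappa>)"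
    unfolding q_def using \<open>\<kappa> > 0\<close> by (intro tendsto_intros quotient) auto
  moreover have "\<forall>\<^sub>F k in sequentially. v \<bullet> u k - 2 * t k * (norm (u k))\<^sup>2 / \<tau> \<le> norm v * sqrt (q k / \<kappa>)"
    using D_le by eventually_elim (meson lower mult_left_mono norm_ge_zero order_trans)
  ultimately show ?thesis
    by (intro tendsto_le[OF sequentially_bot]) simp_all
qed

lemma norm_minus_twice_dist_le:
  fixes v d :: "'a::real_inner"
  assumes inner_le: "v \<bullet> d \<le> norm v * s" and "0 \<le> s"
  shows "norm d - 2 * dist d v \<le> s"
proof (rule ccontr)
  assume contra: "\<not> norm d - 2 * dist d v \<le> s"
  define e where "e = dist d v"
  have "0 \<le> e" unfolding e_def by simp
  have "norm v \<le> norm d + e" unfolding e_def dist_norm using norm_triangle_sub[of v d] by (simp add: norm_minus_commute)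
  have "(norm d)\<^sup>2 = v \<bullet> d + (d - v) \<bullet> d"
    by (simp add: power2_norm_eq_inner inner_diff_left)
  also have "\<dots> \<le> norm v * s + e * norm d"
    using inner_le norm_cauchy_schwarz[of "d - v" d] unfolding e_def dist_norm by linarith
  also have "\<dots> \<le> (norm d + e) * s + e * norm d"
    using \<open>norm v \<le> norm d + e\<close> \<open>0 \<le> s\<close> by (simp add: mult_right_mono)
  also have "\<dots> < (norm d + e) * (norm d - 2 * e) + e * norm d"
    using contra \<open>0 \<le> s\<close> \<open>0 \<le> e\<close> unfolding e_def[symmetric]
    by (intro add_strict_right_mono mult_strict_left_mono) auto
  also have "\<dots> = (norm d)\<^sup>2 - 2 * e\<^sup>2"
    by (simp add: algebra_simps power2_eq_square)
  finally show False using \<open>0 \<le> e\<close> by simp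
qed

lemma eps_proximal_normal_cone_norm_le:
  fixes d :: "'a::real_inner"
  assumes d: "d \<in> eps_proximal_normal_cone \<epsilon> S x"
    and inner_le: "\<And>v. v \<in> proximal_normal_cone S x \<Longrightarrow> v \<bullet> d \<le> norm v * s" and "0 \<le> s"
  shows "(1 - 2 * \<epsilon>) * norm d \<le> s"
proof -
  let ?N = "proximal_normal_cone S x"
  have "?N \<noteq> {}" and "infdist d ?N \<le> \<epsilon> * norm d"
    using d unfolding eps_proximal_normal_cone_def by auto
  moreover have "(norm d - s) / 2 \<le> infdist d ?N"
    unfolding infdist_notempty[OF \<open>?N \<noteq> {}\<close>]
    using norm_minus_twice_dist_le[OF inner_le \<open>0 \<le> s\<close>]
    by (intro cINF_greatest[OF \<open>?N \<noteq> {}\<close>]) (simp add: field_simps)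
  ultimately show ?thesis by (simp add: algebra_simps)
qed

lemma quadratic_growth_imp_local_min:
  assumes "0 \<le> \<kappa>" and "\<forall>\<^sub>F y in nhds x. y \<in> A \<longrightarrow> f x + \<kappa> * (infdist y S)\<^sup>2 \<le> f y"
  shows "\<forall>\<^sub>F y in nhds x. y \<in> A \<longrightarrow> f x \<le> f y"
proof -
  have "0 \<le> \<kappa> * (infdist y S)\<^sup>2" for y
    using \<open>0 \<le> \<kappa>\<close> by simp
  with assms(2) show ?thesis
    by (auto elim!: eventually_mono intro: order_trans[rotated])
qed

lemma second_order_tangent_quotient_tendsto:
  fixes f :: "'a::real_inner \<Rightarrow> real"
  assumes f_deriv: "\<And>y. (f has_derivative (\<lambda>h. gf y \<bullet> h)) (at y)"
    and gf_deriv: "(gf has_derivative H) (at x)" and "gf x \<bullet> d = 0"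
    and t_pos: "\<And>k. t k > 0" and t: "t \<longlonglongrightarrow> 0" and wk: "wk \<longlonglongrightarrow> w"
  shows "(\<lambda>k. (f (x + t k *\<^sub>R (d + (t k / 2) *\<^sub>R wk k)) - f x) / (t k)\<^sup>2) \<longlonglongrightarrow> (gf x \<bullet> w + d \<bullet> H d) / 2"
proof -
  define u where "u k = d + (t k / 2) *\<^sub>R wk k" for k
  have "u \<longlonglongrightarrow> d + (0 / 2) *\<^sub>R w"
    unfolding u_def by (intro tendsto_intros t wk) simp
  then have "u \<longlonglongrightarrow> d" by simp
  note second_order = second_order_quotient_along_sequence_tendsto[OF f_deriv gf_deriv t_pos t this]
  have "(\<lambda>k. gf x \<bullet> wk k / 2 + (f (x + t k *\<^sub>R u k) - f x - t k * (gf x \<bullet> u k)) / (t k)\<^sup>2)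
      \<longlonglongrightarrow> gf x \<bullet> w / 2 + d \<bullet> H d / 2"
    by (intro tendsto_add[OF _ second_order] tendsto_intros wk) simp
  moreover have "gf x \<bullet> wk k / 2 + (f (x + t k *\<^sub>R u k) - f x - t k * (gf x \<bullet> u k)) / (t k)\<^sup>2
      = (f (x + t k *\<^sub>R u k) - f x) / (t k)\<^sup>2" for k
    using t_pos[of k] \<open>gf x \<bullet> d = 0\<close> unfolding u_def
    by (simp add: inner_add_right field_simps power2_eq_square)
  ultimately show ?thesis
    unfolding u_def by (simp add: add_divide_distrib)
qed

lemma quadratic_growth_second_order_tangent_bound:
  fixes f :: "'a::real_inner \<Rightarrow> real"
  assumes f_deriv: "\<And>y. (f has_derivative (\<lambda>h. gf y \<bullet> h)) (at y)"
    and gf_deriv: "(gf has_derivative H) (at x)"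
    and "\<kappa> > 0" and growth: "\<forall>\<^sub>F y in nhds x. y \<in> A \<longrightarrow> f x + \<kappa> * (infdist y S)\<^sup>2 \<le> f y"
    and critical: "gf x \<bullet> d \<le> 0" and w: "w \<in> second_order_tangent_set A x d"
    and d: "d \<in> eps_proximal_normal_cone \<epsilon> S x" and "\<epsilon> < 1/2"
  shows "2 * \<kappa> * (1 - 2 * \<epsilon>)\<^sup>2 * (norm d)\<^sup>2 \<le> gf x \<bullet> w + d \<bullet> H d"
proof -
  obtain t wk where t_pos: "\<And>k. t k > 0" and t: "t \<longlonglongrightarrow> 0" and wk: "wk \<longlonglongrightarrow> w"
    and u_lim: "(\<lambda>k. d + (t k / 2) *\<^sub>R wk k) \<longlonglongrightarrow> d"
    and feasible_seq: "\<And>k. x + t k *\<^sub>R (d + (t k / 2) *\<^sub>R wk k) \<in> A"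
    using second_order_tangent_setE[OF w] by blast
  define u where "u k = d + (t k / 2) *\<^sub>R wk k" for k
  have u: "u \<longlonglongrightarrow> d" and feasible: "\<And>k. x + t k *\<^sub>R u k \<in> A"
    using u_lim feasible_seq unfolding u_def by simp_all
  define a where "a = (gf x \<bullet> w + d \<bullet> H d) / 2"
  have min: "\<forall>\<^sub>F y in nhds x. y \<in> A \<longrightarrow> f x \<le> f y"
    by (rule quadratic_growth_imp_local_min[OF less_imp_le[OF \<open>\<kappa> > 0\<close>] growth])
  have "d \<in> tangent_cone A x"
    using t_pos t u feasible unfolding tangent_cone_def by blast
  from local_minimizer_tangent_cone_nonneg[OF f_deriv min this] critical
  have "gf x \<bullet> d = 0" by simp
  from second_order_tangent_quotient_tendsto[OF f_deriv gf_deriv this t_pos t wk]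
  have quotient: "(\<lambda>k. (f (x + t k *\<^sub>R u k) - f x) / (t k)\<^sup>2) \<longlonglongrightarrow> a"
    unfolding u_def a_def .
  have "0 \<le> a"
    using eventually_nhds_along_sequence[OF min t u] feasible t_pos
    by (intro tendsto_lowerbound[OF quotient]) (auto elim!: eventually_mono)
  moreover have "v \<bullet> d \<le> norm v * sqrt (a / \<kappa>)" if "v \<in> proximal_normal_cone S x" for v
    using quadratic_growth_proximal_normal_inner_le[OF \<open>\<kappa> > 0\<close> growth that t_pos t u feasible quotient] .
  ultimately have "(1 - 2 * \<epsilon>) * norm d \<le> sqrt (a / \<kappa>)"
    using \<open>\<kappa> > 0\<close> by (intro eps_proximal_normal_cone_norm_le[OF d]) auto
  then have "((1 - 2 * \<epsilon>) * norm d)\<^sup>2 \<le> (sqrt (a / \<kappa>))\<^sup>2"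
    using \<open>\<epsilon> < 1/2\<close> by (intro power_mono) auto
  also have "\<dots> = a / \<kappa>"
    using \<open>0 \<le> a\<close> \<open>\<kappa> > 0\<close> by simp
  finally have "((1 - 2 * \<epsilon>) * norm d)\<^sup>2 \<le> a / \<kappa>" .
  with \<open>\<kappa> > 0\<close> show ?thesis
    unfolding a_def by (simp add: pos_le_divide_eq power_mult_distrib mult_ac)
qed

lemma local_second_order_weak_sharp_min_growth:
  assumes wsm: "local_second_order_weak_sharp_min f g K xb \<kappa> \<delta>"
    and x: "x \<in> solution_set f g K \<inter> ball xb \<delta>"
  shows "\<forall>\<^sub>F y in nhds x. y \<in> feasible_set g K \<longrightarrow> f x + \<kappa> * (infdist y (solution_set f g K))\<^sup>2 \<le> f y"
proof -
  have sharp: "f xb + \<kappa> * (infdist y (solution_set f g K))\<^sup>2 \<le> f y"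
    if "y \<in> feasible_set g K" "y \<in> ball xb \<delta>" for y
    using wsm that unfolding local_second_order_weak_sharp_min_def by blast
  have "xb \<in> feasible_set g K"
    using wsm unfolding local_second_order_weak_sharp_min_def by blast
  then have "f x \<le> f xb"
    using x unfolding solution_set_def by blast
  moreover have "f xb \<le> f x"
    using sharp[of x] x unfolding solution_set_def by auto
  ultimately have "f x = f xb" by simp
  with eventually_nhds_in_open[OF open_ball, of x xb \<delta>] x show ?thesis
    by (auto elim!: eventually_mono intro: sharp)
qed

theorem theorem3p2:
  fixes f :: "real^'n \<Rightarrow> real" and g :: "real^'n \<Rightarrow> real^'m"
    and gf :: "real^'n \<Rightarrow> real^'n" and Hf :: "real^'n \<Rightarrow> real^'n^'n"
    and Jg :: "real^'n \<Rightarrow> real^'n^'m" and Hg :: "real^'n \<Rightarrow> (real^'n^'n)^'m"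
    and K :: "(real^'m) set" and xb :: "real^'n" and \<kappa> \<delta> \<epsilon> :: real
    and x d :: "real^'n" and l :: "real^'m"
  assumes f_deriv: "\<And>y. (f has_derivative (\<lambda>h. gf y \<bullet> h)) (at y)"
    and gf_deriv: "\<And>y. (gf has_derivative (\<lambda>h. Hf y *v h)) (at y)"
    and Hf_cont: "continuous_on UNIV Hf"
    and g_deriv: "\<And>y. (g has_derivative (\<lambda>h. Jg y *v h)) (at y)"
    and Jg_deriv: "\<And>y i. ((\<lambda>z. Jg z $ i) has_derivative (\<lambda>h. Hg y $ i *v h)) (at y)"
    and Hg_cont: "continuous_on UNIV Hg"
    and K_closed: "closed K"
    and S_nonempty: "solution_set f g K \<noteq> {}"
    and wsm: "local_second_order_weak_sharp_min f g K xb \<kappa> \<delta>"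
    and eps: "0 \<le> \<epsilon>" "\<epsilon> < 1/2"
    and x_in: "x \<in> solution_set f g K \<inter> ball xb \<delta>"
    and d_in: "d \<in> critical_cone gf Jg g K x \<inter> eps_proximal_normal_cone \<epsilon> (solution_set f g K) x"
    and lagr: "gf x + l v* Jg x = 0"
  shows "(support_fun ((\<lambda>u. Jg x *v u) ` asymptotic_second_order_tangent_cone (feasible_set g K) x d) l \<le> 0) \<and>
         (ereal (d \<bullet> (Hf x *v d) + (\<Sum>i\<in>UNIV. l $ i * (d \<bullet> (Hg x $ i *v d))))
           - support_fun ((\<lambda>u. Jg x *v u + (\<chi> i. d \<bullet> (Hg x $ i *v d)))
                            ` second_order_tangent_set (feasible_set g K) x d) l
         \<ge> ereal (2 * \<kappa> * (1 - 2 * \<epsilon>)\<^sup>2 * (norm d)\<^sup>2))"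
proof -
  have "\<kappa> > 0" using wsm unfolding local_second_order_weak_sharp_min_def by simp
  note growth = local_second_order_weak_sharp_min_growth[OF wsm x_in]
  have min: "\<forall>\<^sub>F y in nhds x. y \<in> feasible_set g K \<longrightarrow> f x \<le> f y"
    by (rule quadratic_growth_imp_local_min[OF less_imp_le[OF \<open>\<kappa> > 0\<close>] growth])
  have critical: "gf x \<bullet> d \<le> 0" and d_eps: "d \<in> eps_proximal_normal_cone \<epsilon> (solution_set f g K) x"
    using d_in unfolding critical_cone_def by auto
  have "l v* Jg x = - gf x"
    using lagr by (simp add: eq_neg_iff_add_eq_0 add.commute)
  then have lagrange: "l \<bullet> (Jg x *v w) = - (gf x \<bullet> w)" for w
    by (simp add: dot_lmul_matrix[symmetric])
  have hessian_term: "l \<bullet> (\<chi> i. d \<bullet> (Hg x $ i *v d)) = (\<Sum>i\<in>UNIV. l $ i * (d \<bullet> (Hg x $ i *v d)))"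
    by (simp add: inner_vec_def)
  show ?thesis (is "?\<sigma>\<^sub>1 \<le> 0 \<and> ereal ?P - ?\<sigma>\<^sub>2 \<ge> ereal ?c")
  proof
    show "?\<sigma>\<^sub>1 \<le> 0"
      using local_minimizer_asymptotic_second_order_tangent_nonneg[OF f_deriv gf_deriv min critical]
      unfolding support_fun_def by (auto intro!: SUP_least simp: lagrange)
    have "?\<sigma>\<^sub>2 \<le> ereal (?P - ?c)"
      using quadratic_growth_second_order_tangent_bound[OF f_deriv gf_deriv \<open>\<kappa> > 0\<close> growth critical _ d_eps eps(2)]
      unfolding support_fun_def by (intro SUP_least) (force simp: inner_add_right lagrange hessian_term)
    then show "ereal ?P - ?\<sigma>\<^sub>2 \<ge> ereal ?c"
      by (cases ?\<sigma>\<^sub>2) auto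
  qed
qed

end
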